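(* For $n\ge2$, \begin{align*} \left|\Pi_n\wr C_2(1^11^2,1^22^1)\right|&=2B(n)+\sum_{j=2}^n\sum_{k=0}^{n-j}B(n-j-k)+B(n-1)\\ &\quad+\sum_{j=2}^{n-1}B(j-1)\left(B(n-j)+\sum_{k=1}^{n-j}\left(\left(k+\binom{n-j}{k}\right) B(n-j-k)\right)\right), \end{align*} where $B(m)$ is the $m$th Bell number.
   Context: For $n\ge0$ let $[n]=\{1,\dots,n\}$. A $2$-colored set partition of $[n]$ is a set partition of $[n]$ together with an assignment of a color from $\{1,2\}$ to each element; $\Pi_n\wr C_2$ is the set of these. For a set $S$ of patterns, $\Pi_n\wr C_2(S)$ is the set of such colored partitions avoiding every pattern in $S$ in the pattern sense. For the patterns used here: $\sigma$ contains $1^11^2$ iff there are $i<j$ in the same block with $i$ colored $1$ and $j$ colored $2$; $\sigma$ contains $1^22^1$ iff there are $i<j$ in different blocks with $i$ colored $2$ and $j$ colored $1$. $B(m)$ is the number of set partitions of $[m]$, with $B(0)=1$. *)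

theory Defs
  imports Main "HOL-Library.Disjoint_Sets" "HOL-Library.FuncSet"
begin

definition Bell :: "nat \<Rightarrow> nat" where
  "Bell m = card {P. partition_on {1..m} P}"

definition colored_partitions :: "nat \<Rightarrow> (nat set set \<times> (nat \<Rightarrow> nat)) set" where
  "colored_partitions n = {(P, c). partition_on {1..n} P \<and> c \<in> {1..n} \<rightarrow>\<^sub>E {1, 2}}"

definition same_block :: "nat set set \<Rightarrow> nat \<Rightarrow> nat \<Rightarrow> bool" where
  "same_block P i j \<longleftrightarrow> (\<exists>B\<in>P. i \<in> B \<and> j \<in> B)"

definition contains_11_12 :: "nat set set \<times> (nat \<Rightarrow> nat) \<Rightarrow> bool" where
  "contains_11_12 \<sigma> = (case \<sigma> of (P, c) \<Rightarrow>
     \<exists>i j. i < j \<and> same_block P i j \<and> c i = 1 \<and> c j = 2)"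

definition contains_12_21 :: "nat set set \<times> (nat \<Rightarrow> nat) \<Rightarrow> bool" where
  "contains_12_21 \<sigma> = (case \<sigma> of (P, c) \<Rightarrow>
     \<exists>i j. i < j \<and> i \<in> \<Union>P \<and> j \<in> \<Union>P \<and> \<not> same_block P i j \<and> c i = 2 \<and> c j = 1)"

definition avoiders :: "nat \<Rightarrow> (nat set set \<times> (nat \<Rightarrow> nat)) set" where
  "avoiders n = {\<sigma> \<in> colored_partitions n. \<not> contains_11_12 \<sigma> \<and> \<not> contains_12_21 \<sigma>}"

end

theory Submission
  imports Defs
begin

(*
  Fix a colouring c of [n]. Avoiding both patterns means that an element coloured 1 never shares a
  block with a later element coloured 2, while an element coloured 2 shares a block with every later
  element coloured 1. If no 2 precedes a 1, then c = 1^p 2^(n-p), and the admissible partitions are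
  those whose blocks lie in [1,p] or in [p+1,n]: B(p) B(n-p) of them. Otherwise let a be the first 2
  and b the last 1. Then [a,b] is forced to be a block, c must read 1^(a-1) 2^x 1^(b-a+1-x) 2^(n-b)
  with 1 <= x <= b-a, and every other block lies to the left of a or to the right of b, which gives
  B(a-1) B(n-b) partitions for each of these b-a colourings. The stated formula is this count
  rewritten with the recurrence B(m+1) = sum_k C(m,k) B(m-k).
*)

section \<open>Counting set partitions\<close>

lemma card_partitions_le_inj_image:
  assumes f: "inj_on f A" and fin: "finite A"
  shows "card {P. partition_on A P} \<le> card {P. partition_on (f ` A) P}"
proof (rule card_inj_on_le)
  show "inj_on ((`) ((`) f)) {P. partition_on A P}"
  proof (rule inj_on_subset)
    show "inj_on ((`) ((`) f)) (Pow (Pow A))"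
      using f by (intro inj_on_image_Pow)
    show "{P. partition_on A P} \<subseteq> Pow (Pow A)"
      by (auto simp: partition_on_def)
  qed
  show "(`) ((`) f) ` {P. partition_on A P} \<subseteq> {P. partition_on (f ` A) P}"
  proof clarify
    fix P assume P: "partition_on A P"
    have "{} \<notin> (`) f ` P"
      using partition_onD3[OF P] by auto
    then show "partition_on (f ` A) ((`) f ` P)"
      using partition_on_inj_image[OF P f] by simp
  qed
  show "finite {P. partition_on (f ` A) P}"
    using fin by (simp add: finitely_many_partition_on)
qed

lemma card_partitions_on:
  assumes "finite A"
  shows "card {P. partition_on A P} = Bell (card A)"
proof -
  obtain h where h: "bij_betw h {1..card A} A"
    using assms ex_bij_betw_nat_finite_1 by blast
  have h': "bij_betw (inv_into {1..card A} h) A {1..card A}"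
    using h by (rule bij_betw_inv_into)
  have "card {P. partition_on A P} \<le> card {P. partition_on {1..card A} P}"
    using card_partitions_le_inj_image[OF bij_betw_imp_inj_on[OF h'] assms] bij_betw_imp_surj_on[OF h']
    by simp
  moreover have "card {P. partition_on {1..card A} P} \<le> card {P. partition_on A P}"
    using card_partitions_le_inj_image[OF bij_betw_imp_inj_on[OF h]] bij_betw_imp_surj_on[OF h]
    by simp
  ultimately show ?thesis
    unfolding Bell_def by (rule antisym)
qed

lemma Bell_0: "Bell 0 = 1"
  by (simp add: Bell_def partition_on_empty)

lemma card_partitions_with_block:
  assumes "X \<noteq> {}" "A \<inter> X = {}"
  shows "card {P. partition_on (A \<union> X) P \<and> X \<in> P \<and> \<Phi> (P - {X})} = card {Q. partition_on A Q \<and> \<Phi> Q}"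
proof (rule bij_betw_same_card[of "\<lambda>P. P - {X}"], rule bij_betw_byWitness[where f' = "insert X"])
  show "\<forall>P\<in>{P. partition_on (A \<union> X) P \<and> X \<in> P \<and> \<Phi> (P - {X})}. insert X (P - {X}) = P"
    by auto
  show "\<forall>Q\<in>{Q. partition_on A Q \<and> \<Phi> Q}. insert X Q - {X} = Q"
    using assms by (auto simp: partition_on_def)
  show "(\<lambda>P. P - {X}) ` {P. partition_on (A \<union> X) P \<and> X \<in> P \<and> \<Phi> (P - {X})} \<subseteq> {Q. partition_on A Q \<and> \<Phi> Q}"
  proof (rule image_subsetI)
    fix P assume "P \<in> {P. partition_on (A \<union> X) P \<and> X \<in> P \<and> \<Phi> (P - {X})}"
    then have P: "partition_on (A \<union> X) P" "X \<in> P" "\<Phi> (P - {X})" by auto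
    have "disjnt X (\<Union>(P - {X}))"
      using P(1,2) by (auto simp: partition_on_def pairwise_def disjnt_def)
    then have "partition_on (A \<union> X - X) (P - {X})"
      using partition_on_insert P(1,2) by (metis insert_Diff)
    moreover have "A \<union> X - X = A" using assms by blast
    ultimately show "P - {X} \<in> {Q. partition_on A Q \<and> \<Phi> Q}" using P(3) by simp
  qed
  show "insert X ` {Q. partition_on A Q \<and> \<Phi> Q} \<subseteq> {P. partition_on (A \<union> X) P \<and> X \<in> P \<and> \<Phi> (P - {X})}"
  proof (rule image_subsetI)
    fix Q assume "Q \<in> {Q. partition_on A Q \<and> \<Phi> Q}"
    then have Q: "partition_on A Q" "\<Phi> Q" by auto
    have "X \<notin> Q" "disjnt X (\<Union>Q)"
      using Q(1) assms by (auto simp: partition_on_def disjnt_def)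
    moreover have "A \<union> X - X = A" using assms by blast
    ultimately show "insert X Q \<in> {P. partition_on (A \<union> X) P \<and> X \<in> P \<and> \<Phi> (P - {X})}"
      using partition_on_insert[of X Q "A \<union> X"] Q assms by auto
  qed
qed

lemma card_partitions_with_block_containing:
  assumes "finite A" "x \<notin> A" "S \<subseteq> A"
  shows "card {P. partition_on (insert x A) P \<and> insert x S \<in> P} = Bell (card A - card S)"
proof -
  have "insert x A = (A - S) \<union> insert x S"
    using assms(3) by auto
  then have "card {P. partition_on (insert x A) P \<and> insert x S \<in> P} = card {Q. partition_on (A - S) Q}"
    using card_partitions_with_block[where \<Phi> = "\<lambda>_. True" and A = "A - S" and X = "insert x S"] assms(2)
    by auto
  also have "\<dots> = Bell (card A - card S)"
    using assms by (simp add: card_partitions_on card_Diff_subset finite_subset)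
  finally show ?thesis .
qed

lemma card_partitions_insert:
  assumes fin: "finite A" and x: "x \<notin> A"
  shows "card {P. partition_on (insert x A) P} = (\<Sum>S\<in>Pow A. Bell (card A - card S))"
proof -
  define F where "F S = {P. partition_on (insert x A) P \<and> insert x S \<in> P}" for S
  have union: "{P. partition_on (insert x A) P} = (\<Union>S\<in>Pow A. F S)"
  proof (intro equalityI subsetI)
    fix P assume "P \<in> {P. partition_on (insert x A) P}"
    then have P: "partition_on (insert x A) P" by simp
    then obtain B where B: "B \<in> P" "x \<in> B"
      using partition_onD1[OF P] by blast
    then have "B - {x} \<in> Pow A" "insert x (B - {x}) = B"
      using partition_onD1[OF P] by auto
    then show "P \<in> (\<Union>S\<in>Pow A. F S)"
      using P B(1) unfolding F_def by (intro UN_I[of "B - {x}"]) auto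
  qed (auto simp: F_def)
  have disj: "F S \<inter> F T = {}" if "S \<in> Pow A" "T \<in> Pow A" "S \<noteq> T" for S T
  proof -
    have "insert x S \<noteq> insert x T" using that x by auto
    moreover have "\<not> disjnt (insert x S) (insert x T)" by (simp add: disjnt_def)
    ultimately show ?thesis
      unfolding F_def by (auto dest: partition_onD2 disjointD)
  qed
  have "finite (F S)" for S
    using finitely_many_partition_on[of "insert x A"] fin unfolding F_def
    by (simp add: finite_subset[rotated])
  then have "card {P. partition_on (insert x A) P} = (\<Sum>S\<in>Pow A. card (F S))"
    unfolding union using fin disj by (intro card_UN_disjoint) auto
  then show ?thesis
    using card_partitions_with_block_containing[OF fin x] by (simp add: F_def)
qed

lemma Bell_Suc: "Bell (Suc m) = (\<Sum>k=0..m. (m choose k) * Bell (m - k))"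
proof -
  have "Bell (Suc m) = card {P. partition_on (insert (Suc m) {1..m}) P}"
    by (simp add: Bell_def atLeastAtMostSuc_conv)
  also have "\<dots> = (\<Sum>S\<in>Pow {1..m}. Bell (m - card S))"
    by (subst card_partitions_insert) auto
  also have "\<dots> = (\<Sum>k=0..m. \<Sum>S\<in>{S. S \<in> Pow {1..m} \<and> card S = k}. Bell (m - card S))"
    by (rule sum.group[symmetric]) (auto simp: card_mono[of "{1..m}", simplified])
  also have "\<dots> = (\<Sum>k=0..m. (m choose k) * Bell (m - k))"
    using n_subsets[of "{1..m}"] by (intro sum.cong refl) simp
  finally show ?thesis .
qed

lemma Bell_1: "Bell 1 = 1"
  using Bell_Suc[of 0] by (simp add: Bell_0)

lemma partition_on_Un:
  assumes "partition_on L Q" "partition_on R Q'" "L \<inter> R = {}"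
  shows "partition_on (L \<union> R) (Q \<union> Q')"
proof (rule partition_onI)
  show "\<Union>(Q \<union> Q') = L \<union> R" "{} \<notin> Q \<union> Q'"
    using assms by (auto simp: partition_on_def)
  have sub: "\<And>p. p \<in> Q \<Longrightarrow> p \<subseteq> L" "\<And>q. q \<in> Q' \<Longrightarrow> q \<subseteq> R"
    using assms(1,2) by (auto simp: partition_on_def)
  have dis: "disjoint Q" "disjoint Q'"
    using assms(1,2) by (auto dest: partition_onD2)
  show "disjnt p q" if "p \<in> Q \<union> Q'" "q \<in> Q \<union> Q'" "p \<noteq> q" for p q
    using that sub[of p] sub[of q] assms(3) disjointD[OF dis(1), of p q] disjointD[OF dis(2), of p q]
    unfolding disjnt_def by blast
qed

lemma partition_on_blocks_within:
  assumes P: "partition_on (L \<union> R) P" and sep: "\<forall>B\<in>P. B \<subseteq> L \<or> B \<subseteq> R" and "L \<inter> R = {}"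
  shows "partition_on L {B\<in>P. B \<subseteq> L}"
proof (rule partition_onI)
  show "\<Union>{B\<in>P. B \<subseteq> L} = L"
  proof (intro equalityI subsetI)
    fix x assume "x \<in> L"
    then obtain B where "B \<in> P" "x \<in> B"
      using P by (auto simp: partition_on_def)
    then show "x \<in> \<Union>{B\<in>P. B \<subseteq> L}"
      using sep \<open>x \<in> L\<close> \<open>L \<inter> R = {}\<close> by blast
  qed auto
qed (use P in \<open>auto simp: partition_on_def pairwise_def disjnt_def\<close>)

lemma card_separating_partitions:
  assumes "finite L" "finite R" "L \<inter> R = {}"
  shows "card {P. partition_on (L \<union> R) P \<and> (\<forall>B\<in>P. B \<subseteq> L \<or> B \<subseteq> R)} = Bell (card L) * Bell (card R)"
proof -
  let ?PL = "{Q. partition_on L Q}" and ?PR = "{Q'. partition_on R Q'}"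
    and ?S = "{P. partition_on (L \<union> R) P \<and> (\<forall>B\<in>P. B \<subseteq> L \<or> B \<subseteq> R)}"
  let ?join = "\<lambda>(Q, Q'). Q \<union> Q'" and ?split = "\<lambda>P. ({B\<in>P. B \<subseteq> L}, {B\<in>P. B \<subseteq> R})"
  have split_join: "?split (?join z) = z" and join_in: "?join z \<in> ?S" if z_in: "z \<in> ?PL \<times> ?PR" for z
  proof -
    obtain Q Q' where z: "z = (Q, Q')" "partition_on L Q" "partition_on R Q'"
      using z_in by auto
    then have "\<forall>B\<in>Q. B \<subseteq> L \<and> B \<noteq> {}" "\<forall>B\<in>Q'. B \<subseteq> R \<and> B \<noteq> {}"
      by (auto simp: partition_on_def)
    then have "{B\<in>Q \<union> Q'. B \<subseteq> L} = Q" "{B\<in>Q \<union> Q'. B \<subseteq> R} = Q'"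
      "\<forall>B\<in>Q \<union> Q'. B \<subseteq> L \<or> B \<subseteq> R"
      using assms(3) by blast+
    moreover have "partition_on (L \<union> R) (Q \<union> Q')"
      using z(2,3) assms(3) by (rule partition_on_Un)
    ultimately show "?split (?join z) = z" "?join z \<in> ?S"
      using z(1) by simp_all
  qed
  have join_split: "?join (?split P) = P" and split_in: "?split P \<in> ?PL \<times> ?PR" if "P \<in> ?S" for P
  proof -
    have P: "partition_on (L \<union> R) P" "\<forall>B\<in>P. B \<subseteq> L \<or> B \<subseteq> R"
      using that by auto
    then show "?join (?split P) = P"
      by auto
    have "partition_on L {B\<in>P. B \<subseteq> L}"
      using P assms(3) by (rule partition_on_blocks_within)
    moreover have "partition_on R {B\<in>P. B \<subseteq> R}"
      using P assms(3) partition_on_blocks_within[of R L P] by (simp add: Un_commute Int_commute disj_commute)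
    ultimately show "?split P \<in> ?PL \<times> ?PR"
      by simp
  qed
  have "bij_betw ?join (?PL \<times> ?PR) ?S"
  proof (rule bij_betw_byWitness[where f' = ?split])
    show "\<forall>z\<in>?PL \<times> ?PR. ?split (?join z) = z"
      by (intro ballI split_join)
    show "\<forall>P\<in>?S. ?join (?split P) = P"
      by (intro ballI join_split)
    show "?join ` (?PL \<times> ?PR) \<subseteq> ?S"
      by (intro image_subsetI join_in)
    show "?split ` ?S \<subseteq> ?PL \<times> ?PR"
      by (intro image_subsetI split_in)
  qed
  then have "card (?PL \<times> ?PR) = card ?S"
    by (rule bij_betw_same_card)
  then show ?thesis
    using assms by (simp add: card_cartesian_product card_partitions_on)
qed

section \<open>Partitions avoiding both patterns for a fixed colouring\<close>

lemma same_blockI: "B \<in> P \<Longrightarrow> i \<in> B \<Longrightarrow> j \<in> B \<Longrightarrow> same_block P i j"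
  by (auto simp: same_block_def)

lemma same_block_sym: "same_block P i j \<Longrightarrow> same_block P j i"
  by (auto simp: same_block_def)

lemma same_block_iff_mem:
  assumes "partition_on A P" "B \<in> P" "i \<in> B"
  shows "same_block P i j \<longleftrightarrow> j \<in> B"
proof -
  have "B' = B" if "B' \<in> P" "i \<in> B'" for B'
    using disjointD[OF partition_onD2[OF assms(1)] that(1) assms(2)] that(2) assms(3) by blast
  then show ?thesis
    using assms(2,3) unfolding same_block_def by blast
qed

lemma same_block_trans:
  assumes "partition_on A P" "same_block P i j" "same_block P j k"
  shows "same_block P i k"
proof -
  obtain B where B: "B \<in> P" "i \<in> B" "j \<in> B"
    using assms(2) by (auto simp: same_block_def)
  have "k \<in> B"
    using same_block_iff_mem[OF assms(1) B(1,3)] assms(3) by simp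
  then show ?thesis
    using same_block_iff_mem[OF assms(1) B(1,2)] by simp
qed

definition avoiding_partitions :: "nat \<Rightarrow> (nat \<Rightarrow> nat) \<Rightarrow> nat set set set" where
  "avoiding_partitions n c =
     {P. partition_on {1..n} P \<and> \<not> contains_11_12 (P, c) \<and> \<not> contains_12_21 (P, c)}"

lemma avoiding_partitions_iff:
  "P \<in> avoiding_partitions n c \<longleftrightarrow> partition_on {1..n} P \<and>
     (\<forall>i\<in>{1..n}. \<forall>j\<in>{1..n}. i < j \<longrightarrow>
        (c i = 1 \<longrightarrow> c j = 2 \<longrightarrow> \<not> same_block P i j) \<and> (c i = 2 \<longrightarrow> c j = 1 \<longrightarrow> same_block P i j))"
proof (cases "partition_on {1..n} P")
  case True
  then have U: "\<Union>P = {1..n}"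
    by (simp add: partition_on_def)
  have mem: "i \<in> {1..n} \<and> j \<in> {1..n}" if "same_block P i j" for i j
    using that U by (auto simp: same_block_def)
  have "(\<not> contains_11_12 (P, c) \<and> \<not> contains_12_21 (P, c)) \<longleftrightarrow>
     (\<forall>i\<in>{1..n}. \<forall>j\<in>{1..n}. i < j \<longrightarrow>
        (c i = 1 \<longrightarrow> c j = 2 \<longrightarrow> \<not> same_block P i j) \<and> (c i = 2 \<longrightarrow> c j = 1 \<longrightarrow> same_block P i j))"
    unfolding contains_11_12_def contains_12_21_def prod.case U
    using mem by blast
  then show ?thesis
    using True by (simp add: avoiding_partitions_def)
qed (simp add: avoiding_partitions_def)

lemma avoiding_partitions_12D:
  "P \<in> avoiding_partitions n c \<Longrightarrow> i \<in> {1..n} \<Longrightarrow> j \<in> {1..n} \<Longrightarrow> i < j \<Longrightarrow> c i = 1 \<Longrightarrow> c j = 2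
    \<Longrightarrow> \<not> same_block P i j"
  by (simp add: avoiding_partitions_iff)

lemma avoiding_partitions_21D:
  "P \<in> avoiding_partitions n c \<Longrightarrow> i \<in> {1..n} \<Longrightarrow> j \<in> {1..n} \<Longrightarrow> i < j \<Longrightarrow> c i = 2 \<Longrightarrow> c j = 1
    \<Longrightarrow> same_block P i j"
  by (simp add: avoiding_partitions_iff)

lemma avoiding_partitions_partition:
  "P \<in> avoiding_partitions n c \<Longrightarrow> partition_on {1..n} P"
  by (simp add: avoiding_partitions_def)

lemma card_avoiders_eq_sum:
  "card (avoiders n) = (\<Sum>c\<in>{1..n} \<rightarrow>\<^sub>E {1,2}. card (avoiding_partitions n c))"
proof -
  have "avoiders n = (\<lambda>(c, P). (P, c)) ` (SIGMA c:{1..n} \<rightarrow>\<^sub>E {1,2}. avoiding_partitions n c)"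
    by (auto simp: avoiders_def colored_partitions_def avoiding_partitions_def image_iff)
  moreover have "inj_on (\<lambda>(c, P). (P, c)) (SIGMA c:{1..n} \<rightarrow>\<^sub>E {1,2}. avoiding_partitions n c)"
    by (auto simp: inj_on_def)
  moreover have "finite (avoiding_partitions n c)" for c
    by (rule finite_subset[OF _ finitely_many_partition_on[of "{1..n}"]])
      (auto simp: avoiding_partitions_def)
  ultimately show ?thesis
    by (simp add: card_image card_SigmaI finite_PiE)
qed

text \<open>Along \<open>[n]\<close> the colouring reads \<open>1\<dots>1 | 2\<dots>2 1\<dots>1 | 2\<dots>2\<close>, the three segments being
  \<open>L\<close>, \<open>X\<close> and \<open>R\<close>; the middle segment is either empty or contains both colours.\<close>

locale layered_colouring =
  fixes n :: nat and c :: "nat \<Rightarrow> nat" and L X R :: "nat set"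
  assumes cover: "L \<union> X \<union> R = {1..n}"
    and L_less: "\<And>i j. i \<in> L \<Longrightarrow> j \<in> X \<union> R \<Longrightarrow> i < j"
    and X_less: "\<And>i j. i \<in> X \<Longrightarrow> j \<in> R \<Longrightarrow> i < j"
    and colour_L: "\<And>i. i \<in> L \<Longrightarrow> c i = 1"
    and colour_R: "\<And>i. i \<in> R \<Longrightarrow> c i = 2"
    and colour_X: "\<And>i. i \<in> X \<Longrightarrow> c i = 1 \<or> c i = 2"
    and X_twos_first: "\<And>i j. i \<in> X \<Longrightarrow> j \<in> X \<Longrightarrow> c i = 1 \<Longrightarrow> c j = 2 \<Longrightarrow> j < i"
    and X_both_colours: "X \<noteq> {} \<Longrightarrow> \<exists>a\<in>X. \<exists>b\<in>X. c a = 2 \<and> c b = 1"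
begin

lemma mem_layers: "i \<in> {1..n} \<longleftrightarrow> i \<in> L \<or> i \<in> X \<or> i \<in> R"
  using cover by blast

lemma layers_disjoint: "L \<inter> X = {}" "L \<inter> R = {}" "X \<inter> R = {}"
  using L_less X_less by blast+

lemma descent_in_block:
  assumes P: "P \<in> avoiding_partitions n c" and ab: "a \<in> X" "b \<in> X" "c a = 2" "c b = 1"
    and B: "B \<in> P" "a \<in> B"
  shows "a \<in> {1..n}" "b \<in> {1..n}" "b \<in> B"
proof -
  show abn: "a \<in> {1..n}" "b \<in> {1..n}"
    using ab(1,2) cover by blast+
  have "a < b"
    using X_twos_first ab by blast
  then show "b \<in> B"
    using avoiding_partitions_21D[OF P abn _ ab(3,4)] same_block_iff_mem[OF avoiding_partitions_partition[OF P] B]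
    by blast
qed

lemma X_subset_block:
  assumes P: "P \<in> avoiding_partitions n c" and ab: "a \<in> X" "b \<in> X" "c a = 2" "c b = 1"
    and B: "B \<in> P" "a \<in> B"
  shows "X \<subseteq> B"
proof
  have part: "partition_on {1..n} P"
    using P by (rule avoiding_partitions_partition)
  note abn = descent_in_block[OF assms]
  fix i assume "i \<in> X"
  then have i: "i \<in> {1..n}"
    using cover by blast
  show "i \<in> B"
  proof (cases "c i = 1")
    case True
    then have "a < i"
      using X_twos_first[OF \<open>i \<in> X\<close> ab(1) _ ab(3)] by simp
    then have "same_block P a i"
      using avoiding_partitions_21D[OF P abn(1) i _ ab(3) True] by simp
    then show ?thesis
      using same_block_iff_mem[OF part B] by simp
  next
    case False
    then have "c i = 2"
      using colour_X \<open>i \<in> X\<close> by blast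
    then have "i < b"
      using X_twos_first[OF ab(2) \<open>i \<in> X\<close> ab(4)] by simp
    then have "same_block P b i"
      using same_block_sym avoiding_partitions_21D[OF P i abn(2) _ \<open>c i = 2\<close> ab(4)] by blast
    then show ?thesis
      using same_block_iff_mem[OF part B(1) abn(3)] by simp
  qed
qed

lemma block_subset_X:
  assumes P: "P \<in> avoiding_partitions n c" and ab: "a \<in> X" "b \<in> X" "c a = 2" "c b = 1"
    and B: "B \<in> P" "a \<in> B"
  shows "B \<subseteq> X"
proof
  note abn = descent_in_block[OF assms]
  fix i assume "i \<in> B"
  then have i: "i \<in> {1..n}"
    using partition_onD1[OF avoiding_partitions_partition[OF P]] B(1) by blast
  have "i \<notin> L"
  proof
    assume "i \<in> L"
    then have "i < a" "c i = 1"
      using L_less ab(1) colour_L by auto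
    then have "\<not> same_block P i a"
      using avoiding_partitions_12D[OF P i abn(1) _ _ ab(3)] by blast
    then show False
      using same_blockI[OF B(1) \<open>i \<in> B\<close> B(2)] by blast
  qed
  moreover have "i \<notin> R"
  proof
    assume "i \<in> R"
    then have "b < i" "c i = 2"
      using X_less ab(2) colour_R by auto
    then have "\<not> same_block P b i"
      using avoiding_partitions_12D[OF P abn(2) i _ ab(4)] by blast
    then show False
      using same_blockI[OF B(1) abn(3) \<open>i \<in> B\<close>] by blast
  qed
  ultimately show "i \<in> X"
    using i mem_layers by blast
qed

lemma X_in_avoiding_partition:
  assumes P: "P \<in> avoiding_partitions n c" and "X \<noteq> {}"
  shows "X \<in> P"
proof -
  obtain a b where ab: "a \<in> X" "b \<in> X" "c a = 2" "c b = 1"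
    using X_both_colours \<open>X \<noteq> {}\<close> by blast
  moreover obtain B where B: "B \<in> P" "a \<in> B"
    using partition_onD1[OF avoiding_partitions_partition[OF P]] ab(1) cover by blast
  ultimately have "B = X"
    using X_subset_block[OF P] block_subset_X[OF P] by blast
  then show ?thesis
    using B(1) by simp
qed

lemma avoiding_partition_blocks_separated:
  assumes P: "P \<in> avoiding_partitions n c" and B: "B \<in> P" "B \<noteq> X"
  shows "B \<subseteq> L \<or> B \<subseteq> R"
proof (rule ccontr)
  assume "\<not> (B \<subseteq> L \<or> B \<subseteq> R)"
  then obtain i j where ij: "i \<in> B" "i \<notin> R" "j \<in> B" "j \<notin> L"
    by blast
  have part: "partition_on {1..n} P"
    using P by (rule avoiding_partitions_partition)
  have "B \<inter> X = {}"
  proof (cases "X = {}")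
    case False
    then have "X \<in> P" using X_in_avoiding_partition P by blast
    then show ?thesis using disjointD[OF partition_onD2[OF part] B(1)] B(2) by blast
  qed simp
  moreover have "B \<subseteq> {1..n}"
    using partition_onD1[OF part] B(1) by blast
  ultimately have "i \<in> L" "j \<in> R" "i \<in> {1..n}" "j \<in> {1..n}"
    using ij cover by blast+
  moreover have "i < j" "c i = 1" "c j = 2"
    using \<open>i \<in> L\<close> \<open>j \<in> R\<close> L_less colour_L colour_R by auto
  ultimately have "\<not> same_block P i j"
    using avoiding_partitions_12D[OF P] by blast
  then show False
    using same_blockI[OF B(1) ij(1,3)] by blast
qed

lemma layered_partition_avoiding:
  assumes part: "partition_on {1..n} P" and X: "X \<noteq> {} \<Longrightarrow> X \<in> P"
    and sep: "\<forall>B\<in>P - {X}. B \<subseteq> L \<or> B \<subseteq> R"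
  shows "P \<in> avoiding_partitions n c"
proof -
  have no_12: "\<not> same_block P i j" if "i < j" "c i = 1" "c j = 2" for i j
  proof
    assume "same_block P i j"
    then obtain B where B: "B \<in> P" "i \<in> B" "j \<in> B"
      by (auto simp: same_block_def)
    show False
    proof (cases "B = X")
      case True
      then show False using X_twos_first[of i j] B(2,3) that by simp
    next
      case False
      then have "B \<subseteq> L \<or> B \<subseteq> R" using sep B(1) by blast
      then show False using colour_L[of j] colour_R[of i] B(2,3) that(2,3) by auto
    qed
  qed
  have yes_21: "same_block P i j" if "i \<in> {1..n}" "j \<in> {1..n}" "i < j" "c i = 2" "c j = 1" for i j
  proof -
    have "i \<notin> L" "j \<notin> R"
      using that(4,5) colour_L[of i] colour_R[of j] by auto
    then have "i \<in> X \<union> R"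
      using that(1) mem_layers by blast
    then have "j \<notin> L"
      using L_less[of j i] \<open>i < j\<close> by auto
    then have "j \<in> X"
      using that(2) mem_layers \<open>j \<notin> R\<close> by blast
    then have "i \<in> X"
      using X_less[of j i] \<open>i < j\<close> \<open>i \<in> X \<union> R\<close> by auto
    then have "X \<in> P"
      using X by blast
    then show ?thesis
      using \<open>i \<in> X\<close> \<open>j \<in> X\<close> by (rule same_blockI)
  qed
  show ?thesis
    unfolding avoiding_partitions_iff using part no_12 yes_21 by blast
qed

lemma avoiding_partitions_eq:
  "avoiding_partitions n c =
    {P. partition_on {1..n} P \<and> (X \<noteq> {} \<longrightarrow> X \<in> P) \<and> (\<forall>B\<in>P - {X}. B \<subseteq> L \<or> B \<subseteq> R)}"
proof (intro equalityI subsetI)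
  fix P assume "P \<in> avoiding_partitions n c"
  then show "P \<in> {P. partition_on {1..n} P \<and> (X \<noteq> {} \<longrightarrow> X \<in> P) \<and> (\<forall>B\<in>P - {X}. B \<subseteq> L \<or> B \<subseteq> R)}"
    using avoiding_partitions_partition X_in_avoiding_partition avoiding_partition_blocks_separated
    by simp
qed (use layered_partition_avoiding in simp)

lemma card_avoiding_partitions: "card (avoiding_partitions n c) = Bell (card L) * Bell (card R)"
proof -
  have "L \<subseteq> {1..n}" "R \<subseteq> {1..n}"
    using cover by blast+
  then have fin: "finite L" "finite R"
    by (auto intro: finite_subset)
  have LR: "L \<union> R \<union> X = {1..n}"
    using cover by blast
  show ?thesis
  proof (cases "X = {}")
    case True
    then have "avoiding_partitions n c = {P. partition_on (L \<union> R) P \<and> (\<forall>B\<in>P. B \<subseteq> L \<or> B \<subseteq> R)}"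
      unfolding avoiding_partitions_eq using LR by auto
    then show ?thesis
      using card_separating_partitions fin layers_disjoint by simp
  next
    case False
    then have "avoiding_partitions n c =
        {P. partition_on ((L \<union> R) \<union> X) P \<and> X \<in> P \<and> (\<forall>B\<in>P - {X}. B \<subseteq> L \<or> B \<subseteq> R)}"
      unfolding avoiding_partitions_eq LR by simp
    moreover have "(L \<union> R) \<inter> X = {}"
      using layers_disjoint by blast
    ultimately have "card (avoiding_partitions n c)
        = card {Q. partition_on (L \<union> R) Q \<and> (\<forall>B\<in>Q. B \<subseteq> L \<or> B \<subseteq> R)}"
      using card_partitions_with_block[OF False] by simp
    then show ?thesis
      using card_separating_partitions fin layers_disjoint by simp
  qed
qed

end

section \<open>The colourings admitting an avoiding partition\<close>

definition twos_colouring :: "nat \<Rightarrow> (nat \<Rightarrow> bool) \<Rightarrow> nat \<Rightarrow> nat" where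
  "twos_colouring n T = (\<lambda>i\<in>{1..n}. if T i then 2 else 1)"

lemma twos_colouring_apply:
  "i \<in> {1..n} \<Longrightarrow> twos_colouring n T i = (if T i then 2 else 1)"
  by (simp add: twos_colouring_def)

lemma twos_colouring_eq_2: "i \<in> {1..n} \<Longrightarrow> twos_colouring n T i = 2 \<longleftrightarrow> T i"
  by (simp add: twos_colouring_apply)

lemma twos_colouring_eq_1: "i \<in> {1..n} \<Longrightarrow> twos_colouring n T i = 1 \<longleftrightarrow> \<not> T i"
  by (simp add: twos_colouring_apply)

lemma twos_colouring_in_colourings: "twos_colouring n T \<in> {1..n} \<rightarrow>\<^sub>E {1, 2}"
  by (simp add: twos_colouring_def)

lemma eq_twos_colouringI:
  assumes "c \<in> {1..n} \<rightarrow>\<^sub>E {1, 2}" and "\<And>i. i \<in> {1..n} \<Longrightarrow> c i = 2 \<longleftrightarrow> T i"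
  shows "c = twos_colouring n T"
proof -
  have "c = restrict c {1..n}"
    using assms(1) by simp
  also have "\<dots> = twos_colouring n T"
    unfolding twos_colouring_def
    by (rule restrict_ext) (use assms PiE_mem in fastforce)
  finally show ?thesis .
qed

lemma twos_colouring_eqD:
  assumes "twos_colouring n T = twos_colouring n T'" "i \<in> {1..n}"
  shows "T i \<longleftrightarrow> T' i"
proof -
  have "twos_colouring n T i = twos_colouring n T' i"
    using assms(1) by (rule fun_cong)
  then show ?thesis
    using assms(2) by (cases "T i"; cases "T' i") (simp_all add: twos_colouring_apply)
qed

lemma colouring_value_cases: "c \<in> {1..n} \<rightarrow>\<^sub>E {1, 2} \<Longrightarrow> i \<in> {1..n} \<Longrightarrow> c i = 1 \<or> c i = 2"
  using PiE_mem by fastforce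

definition monotone_colouring :: "nat \<Rightarrow> nat \<Rightarrow> nat \<Rightarrow> nat" where
  "monotone_colouring n p = twos_colouring n (\<lambda>i. p < i)"

definition bump_colouring :: "nat \<Rightarrow> nat \<times> nat \<times> nat \<Rightarrow> nat \<Rightarrow> nat" where
  "bump_colouring n t = (case t of (a, k, x) \<Rightarrow> twos_colouring n (\<lambda>i. a \<le> i \<and> i < a + x \<or> a + k < i))"

definition bump_params :: "nat \<Rightarrow> (nat \<times> nat \<times> nat) set" where
  "bump_params n = (SIGMA a:{1..n}. SIGMA k:{1..n-a}. {1..k})"

lemma monotone_colouring_in_colourings: "monotone_colouring n p \<in> {1..n} \<rightarrow>\<^sub>E {1, 2}"
  unfolding monotone_colouring_def by (rule twos_colouring_in_colourings)

lemma bump_colouring_in_colourings: "bump_colouring n t \<in> {1..n} \<rightarrow>\<^sub>E {1, 2}"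
proof (cases t)
  case (fields a k x)
  show ?thesis
    unfolding fields bump_colouring_def prod.case by (rule twos_colouring_in_colourings)
qed

lemma layered_monotone_colouring:
  assumes "p \<le> n"
  shows "layered_colouring n (monotone_colouring n p) {1..p} {} {p<..n}"
  using assms by unfold_locales (auto simp: monotone_colouring_def twos_colouring_apply)

lemma layered_bump_colouring:
  assumes "(a, k, x) \<in> bump_params n"
  shows "layered_colouring n (bump_colouring n (a, k, x)) {1..<a} {a..a+k} {a+k<..n}"
proof -
  have par: "1 \<le> a" "1 \<le> x" "x \<le> k" "a + k \<le> n"
    using assms by (auto simp: bump_params_def)
  let ?c = "bump_colouring n (a, k, x)"
  have c2: "?c i = 2 \<longleftrightarrow> a \<le> i \<and> i < a + x \<or> a + k < i" if "i \<in> {1..n}" for i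
    unfolding bump_colouring_def prod.case by (rule twos_colouring_eq_2[OF that])
  have c1: "?c i = 1 \<longleftrightarrow> \<not> (a \<le> i \<and> i < a + x \<or> a + k < i)" if "i \<in> {1..n}" for i
    unfolding bump_colouring_def prod.case by (rule twos_colouring_eq_1[OF that])
  show ?thesis
  proof unfold_locales
    show "\<exists>i\<in>{a..a+k}. \<exists>j\<in>{a..a+k}. ?c i = 2 \<and> ?c j = 1"
      using par c1[of "a + k"] c2[of a] by (intro bexI[of _ a] bexI[of _ "a + k"]) auto
  qed (use par c1 c2 in auto)
qed

lemma card_avoiding_monotone_colouring:
  "p \<le> n \<Longrightarrow> card (avoiding_partitions n (monotone_colouring n p)) = Bell p * Bell (n - p)"
  using layered_colouring.card_avoiding_partitions[OF layered_monotone_colouring] by simp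

lemma card_avoiding_bump_colouring:
  "(a, k, x) \<in> bump_params n \<Longrightarrow>
    card (avoiding_partitions n (bump_colouring n (a, k, x))) = Bell (a - 1) * Bell (n - (a + k))"
  using layered_colouring.card_avoiding_partitions[OF layered_bump_colouring] by simp

lemma avoiding_no_ascent_within_descent:
  assumes P: "P \<in> avoiding_partitions n c"
    and ab: "a \<in> {1..n}" "b \<in> {1..n}" "c a = 2" "c b = 1"
    and ij: "a \<le> i" "i < j" "j \<le> b" "c i = 1" "c j = 2"
  shows False
proof -
  have part: "partition_on {1..n} P"
    using P by (rule avoiding_partitions_partition)
  have "a < i" "j < b"
    using ab(3,4) ij by (auto simp: le_less)
  then have ijn: "i \<in> {1..n}" "j \<in> {1..n}"
    using ab(1,2) ij(2) by auto
  have "same_block P i a"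
    using avoiding_partitions_21D[OF P ab(1) ijn(1) \<open>a < i\<close> ab(3) ij(4)] same_block_sym by blast
  moreover have "same_block P a b"
    using avoiding_partitions_21D[OF P ab(1,2) _ ab(3,4)] \<open>a < i\<close> \<open>j < b\<close> ij(2) by simp
  moreover have "same_block P b j"
    using avoiding_partitions_21D[OF P ijn(2) ab(2) \<open>j < b\<close> ij(5) ab(4)] same_block_sym by blast
  ultimately have "same_block P i j"
    using same_block_trans[OF part] by blast
  then show False
    using avoiding_partitions_12D[OF P ijn ij(2,4,5)] by blast
qed

lemma monotone_colouring_if_no_descent:
  assumes c: "c \<in> {1..n} \<rightarrow>\<^sub>E {1, 2}"
    and no_descent: "\<And>i j. i \<in> {1..n} \<Longrightarrow> j \<in> {1..n} \<Longrightarrow> i < j \<Longrightarrow> c i = 2 \<Longrightarrow> c j \<noteq> 1"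
  shows "c \<in> monotone_colouring n ` {0..n}"
proof -
  define ones where "ones = insert 0 {i\<in>{1..n}. c i = 1}"
  define p where "p = Max ones"
  have fin: "finite ones" and "p \<le> n"
    unfolding p_def ones_def by auto
  have "c = monotone_colouring n p"
    unfolding monotone_colouring_def
  proof (rule eq_twos_colouringI[OF c])
    fix i assume i: "i \<in> {1..n}"
    show "c i = 2 \<longleftrightarrow> p < i"
    proof
      assume "c i = 2"
      have "j < i" if "j \<in> ones" for j
      proof -
        have "j = 0 \<or> j \<in> {1..n} \<and> c j = 1"
          using that by (auto simp: ones_def)
        then show ?thesis
        proof
          assume j: "j \<in> {1..n} \<and> c j = 1"
          then have "j \<noteq> i" "\<not> i < j"
            using \<open>c i = 2\<close> no_descent[OF i] by auto
          then show ?thesis by linarith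
        qed (use i in simp)
      qed
      then show "p < i"
        unfolding p_def using fin by (simp add: ones_def)
    next
      assume "p < i"
      then have "i \<notin> ones"
        using Max_ge[OF fin] unfolding p_def by (meson not_le)
      then show "c i = 2"
        using colouring_value_cases[OF c i] i by (auto simp: ones_def)
    qed
  qed
  then show ?thesis
    using \<open>p \<le> n\<close> by auto
qed

lemma avoiding_colouring_2_iff:
  assumes c: "c \<in> {1..n} \<rightarrow>\<^sub>E {1, 2}" and P: "P \<in> avoiding_partitions n c"
    and a: "a \<in> {1..n}" "c a = 2" "\<And>i. i \<in> {1..n} \<Longrightarrow> c i = 2 \<Longrightarrow> a \<le> i"
    and b: "b \<in> {1..n}" "c b = 1" "\<And>i. i \<in> {1..n} \<Longrightarrow> c i = 1 \<Longrightarrow> i \<le> b"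
    and d: "a < d" "c d = 1" "\<And>i. i \<in> {1..n} \<Longrightarrow> a < i \<Longrightarrow> c i = 1 \<Longrightarrow> d \<le> i"
    and i: "i \<in> {1..n}"
  shows "c i = 2 \<longleftrightarrow> a \<le> i \<and> i < d \<or> b < i"
proof
  assume "c i = 2"
  moreover have "\<not> (d \<le> i \<and> i \<le> b)"
  proof
    assume "d \<le> i \<and> i \<le> b"
    moreover have "d \<noteq> i"
      using d(2) \<open>c i = 2\<close> by auto
    ultimately show False
      using avoiding_no_ascent_within_descent[OF P a(1) b(1) a(2) b(2), of d i] d(1,2) \<open>c i = 2\<close>
      by auto
  qed
  ultimately show "a \<le> i \<and> i < d \<or> b < i"
    using a(3)[OF i] by auto
next
  assume "a \<le> i \<and> i < d \<or> b < i"
  then have "c i \<noteq> 1"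
    using a(2) b(3)[OF i] d(3)[OF i] by (auto simp: le_less)
  then show "c i = 2"
    using colouring_value_cases[OF c i] by simp
qed

lemma bump_colouring_if_descent:
  assumes c: "c \<in> {1..n} \<rightarrow>\<^sub>E {1, 2}" and P: "P \<in> avoiding_partitions n c"
    and descent: "i\<^sub>0 \<in> {1..n}" "j\<^sub>0 \<in> {1..n}" "i\<^sub>0 < j\<^sub>0" "c i\<^sub>0 = 2" "c j\<^sub>0 = 1"
  shows "c \<in> bump_colouring n ` bump_params n"
proof -
  define a where "a = Min {i\<in>{1..n}. c i = 2}"
  define b where "b = Max {i\<in>{1..n}. c i = 1}"
  define d where "d = Min {i\<in>{1..n}. a < i \<and> c i = 1}"
  have "a \<in> {i\<in>{1..n}. c i = 2}"
    unfolding a_def by (rule Min_in) (simp, use descent(1,4) in blast)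
  then have a: "a \<in> {1..n}" "c a = 2" "\<And>i. i \<in> {1..n} \<Longrightarrow> c i = 2 \<Longrightarrow> a \<le> i"
    unfolding a_def by auto
  have "b \<in> {i\<in>{1..n}. c i = 1}"
    unfolding b_def by (rule Max_in) (simp, use descent(2,5) in blast)
  then have b: "b \<in> {1..n}" "c b = 1" "\<And>i. i \<in> {1..n} \<Longrightarrow> c i = 1 \<Longrightarrow> i \<le> b"
    unfolding b_def by auto
  have "a < b"
    using a(3)[OF descent(1,4)] b(3)[OF descent(2,5)] descent(3) by linarith
  have "d \<in> {i\<in>{1..n}. a < i \<and> c i = 1}"
    unfolding d_def by (rule Min_in) (use b(1,2) \<open>a < b\<close> in auto)
  then have d: "d \<in> {1..n}" "a < d" "c d = 1" "\<And>i. i \<in> {1..n} \<Longrightarrow> a < i \<Longrightarrow> c i = 1 \<Longrightarrow> d \<le> i"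
    unfolding d_def by auto
  have "d \<le> b"
    using b(3) d(1,3) by blast
  have "c = bump_colouring n (a, b - a, d - a)"
    unfolding bump_colouring_def prod.case
    by (rule eq_twos_colouringI[OF c])
      (use avoiding_colouring_2_iff[OF c P a b d(2-4)] \<open>a < d\<close> \<open>d \<le> b\<close> in auto)
  moreover have "(a, b - a, d - a) \<in> bump_params n"
    using a(1) b(1) \<open>a < d\<close> \<open>d \<le> b\<close> by (auto simp: bump_params_def)
  ultimately show ?thesis
    by blast
qed

lemma colouring_with_avoiding_partition:
  assumes c: "c \<in> {1..n} \<rightarrow>\<^sub>E {1, 2}" and "avoiding_partitions n c \<noteq> {}"
  shows "c \<in> monotone_colouring n ` {0..n} \<union> bump_colouring n ` bump_params n"
proof (cases "\<exists>i\<in>{1..n}. \<exists>j\<in>{1..n}. i < j \<and> c i = 2 \<and> c j = 1")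
  case True
  moreover obtain P where "P \<in> avoiding_partitions n c"
    using assms(2) by blast
  ultimately show ?thesis
    using bump_colouring_if_descent[OF c] by blast
next
  case False
  then show ?thesis
    using monotone_colouring_if_no_descent[OF c] by blast
qed

lemma inj_on_monotone_colouring: "inj_on (monotone_colouring n) {0..n}"
proof (rule inj_onI)
  fix p q assume pq: "p \<in> {0..n}" "q \<in> {0..n}" "monotone_colouring n p = monotone_colouring n q"
  have same: "p < i \<longleftrightarrow> q < i" if "i \<in> {1..n}" for i
    using twos_colouring_eqD[OF pq(3)[unfolded monotone_colouring_def] that] .
  show "p = q"
  proof (cases p q rule: linorder_cases)
    case less
    then show ?thesis using same[of q] pq(2) by simp
  next
    case greater
    then show ?thesis using same[of p] pq(1) by simp
  qed
qed

lemma inj_on_bump_colouring: "inj_on (bump_colouring n) (bump_params n)"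
proof (rule inj_onI)
  fix t t' assume tt: "t \<in> bump_params n" "t' \<in> bump_params n" "bump_colouring n t = bump_colouring n t'"
  obtain a k x a' k' x' where t: "t = (a, k, x)" "t' = (a', k', x')"
    by (cases t, cases t') auto
  have eq: "bump_colouring n (a, k, x) = bump_colouring n (a', k', x')"
    using tt(3) t by simp
  have par: "1 \<le> a" "1 \<le> x" "x \<le> k" "a + k \<le> n" "1 \<le> a'" "1 \<le> x'" "x' \<le> k'" "a' + k' \<le> n"
    using tt(1,2) t by (auto simp: bump_params_def)
  have same: "(a \<le> i \<and> i < a + x \<or> a + k < i) \<longleftrightarrow> (a' \<le> i \<and> i < a' + x' \<or> a' + k' < i)"
    if "i \<in> {1..n}" for i
    using twos_colouring_eqD[OF eq[unfolded bump_colouring_def prod.case] that] .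
  have "a = a'"
    using same[of a] same[of a'] par by auto
  moreover have "x = x'"
    using same[of "a + x"] same[of "a' + x'"] par \<open>a = a'\<close> by auto
  moreover have "k = k'"
    using same[of "a + k"] same[of "a' + k'"] par \<open>a = a'\<close> by auto
  ultimately show "t = t'"
    using t by simp
qed

lemma monotone_bump_colourings_disjoint:
  "monotone_colouring n ` {0..n} \<inter> bump_colouring n ` bump_params n = {}"
proof -
  have "monotone_colouring n p \<noteq> bump_colouring n t" if "t \<in> bump_params n" for p t
  proof
    obtain a k x where t: "t = (a, k, x)"
      by (cases t) auto
    assume eq: "monotone_colouring n p = bump_colouring n t"
    have par: "1 \<le> a" "1 \<le> x" "x \<le> k" "a + k \<le> n"
      using that t by (auto simp: bump_params_def)
    have same: "p < i \<longleftrightarrow> (a \<le> i \<and> i < a + x \<or> a + k < i)" if "i \<in> {1..n}" for i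
      using twos_colouring_eqD[OF eq[unfolded t monotone_colouring_def bump_colouring_def prod.case] that] .
    show False
      using same[of a] same[of "a + k"] par by auto
  qed
  then show ?thesis
    by blast
qed

lemma card_avoiders_Bell_sums:
  "card (avoiders n) = (\<Sum>p=0..n. Bell p * Bell (n - p))
    + (\<Sum>a=1..n. \<Sum>k=1..n-a. k * (Bell (a - 1) * Bell (n - (a + k))))"
proof -
  let ?M = "monotone_colouring n ` {0..n}" and ?U = "bump_colouring n ` bump_params n"
  have fin_params: "finite (bump_params n)"
    by (simp add: bump_params_def)
  have "card (avoiders n) = (\<Sum>c\<in>?M \<union> ?U. card (avoiding_partitions n c))"
    unfolding card_avoiders_eq_sum
  proof (rule sum.mono_neutral_right)
    show "finite ({1..n} \<rightarrow>\<^sub>E {1::nat, 2})"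
      by (simp add: finite_PiE)
    show "?M \<union> ?U \<subseteq> {1..n} \<rightarrow>\<^sub>E {1, 2}"
      using monotone_colouring_in_colourings bump_colouring_in_colourings by blast
    show "\<forall>c\<in>({1..n} \<rightarrow>\<^sub>E {1, 2}) - (?M \<union> ?U). card (avoiding_partitions n c) = 0"
      using colouring_with_avoiding_partition by (metis Diff_iff card.empty)
  qed
  also have "\<dots> = (\<Sum>c\<in>?M. card (avoiding_partitions n c)) + (\<Sum>c\<in>?U. card (avoiding_partitions n c))"
    using fin_params monotone_bump_colourings_disjoint by (intro sum.union_disjoint) auto
  also have "(\<Sum>c\<in>?M. card (avoiding_partitions n c)) = (\<Sum>p=0..n. Bell p * Bell (n - p))"
    by (simp add: sum.reindex[OF inj_on_monotone_colouring] card_avoiding_monotone_colouring)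
  also have "(\<Sum>c\<in>?U. card (avoiding_partitions n c))
      = (\<Sum>(a, k, x)\<in>bump_params n. Bell (a - 1) * Bell (n - (a + k)))"
    by (auto simp: sum.reindex[OF inj_on_bump_colouring] card_avoiding_bump_colouring intro!: sum.cong)
  also have "\<dots> = (\<Sum>a=1..n. \<Sum>(k, x)\<in>(SIGMA k:{1..n-a}. {1..k}). Bell (a - 1) * Bell (n - (a + k)))"
    unfolding bump_params_def by (rule sum.Sigma[symmetric]) auto
  also have "\<dots> = (\<Sum>a=1..n. \<Sum>k=1..n-a. \<Sum>x=1..k. Bell (a - 1) * Bell (n - (a + k)))"
    by (intro sum.cong refl sum.Sigma[symmetric]) auto
  finally show ?thesis
    by simp
qed

section \<open>Rearranging the Bell sums\<close>

lemma sum_weighted_eq_double_sum: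
  "(\<Sum>k=1..n-1. k * f (n - 1 - k)) = (\<Sum>j=2..n. \<Sum>k=0..n-j. (f (n - j - k) :: nat))"
proof -
  have "(\<Sum>k=1..n-1. k * f (n - 1 - k)) = (\<Sum>(k, i)\<in>(SIGMA k:{1..n-1}. {1..k}). f (n - 1 - k))"
    by (simp add: sum.Sigma[symmetric])
  also have "\<dots> = (\<Sum>(j, k)\<in>(SIGMA j:{2..n}. {0..n-j}). f (n - j - k))"
    by (rule sum.reindex_bij_witness[where i = "\<lambda>(j, k). (k + j - 1, j - 1)" and j = "\<lambda>(k, i). (i + 1, k - i)"])
      auto
  also have "\<dots> = (\<Sum>j=2..n. \<Sum>k=0..n-j. f (n - j - k))"
    by (simp add: sum.Sigma)
  finally show ?thesis .
qed

lemma Bell_plus_binomial_sum: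
  "Bell m + (\<Sum>k=1..m. (k + (m choose k)) * Bell (m - k)) = Bell (Suc m) + (\<Sum>k=1..m. k * Bell (m - k))"
proof -
  have "Bell (Suc m) = Bell m + (\<Sum>k=1..m. (m choose k) * Bell (m - k))"
    unfolding Bell_Suc by (simp add: sum.atLeast_Suc_atMost)
  then show ?thesis
    by (simp add: distrib_right sum.distrib)
qed

lemma Bell_convolution_split:
  assumes "n \<ge> 2"
  shows "(\<Sum>p=0..n. Bell p * Bell (n - p)) = 2 * Bell n + Bell (n - 1) + (\<Sum>j=2..n-1. Bell (j - 1) * Bell (Suc (n - j)))"
proof -
  obtain m where n: "n = Suc (Suc m)"
    using assms by (metis add_2_eq_Suc le_Suc_ex)
  have "(\<Sum>j=2..n-1. Bell (j - 1) * Bell (Suc (n - j))) = (\<Sum>p=1..m. Bell p * Bell (n - p))"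
    unfolding n by (rule sum.reindex_bij_witness[where i = Suc and j = "\<lambda>j. j - 1"]) (auto simp: Suc_diff_le)
  moreover have "(\<Sum>p=0..n. Bell p * Bell (n - p)) = Bell n + (\<Sum>p=1..m. Bell p * Bell (n - p)) + Bell (n - 1) + Bell n"
    unfolding n using Bell_1 by (simp add: sum.atLeast_Suc_atMost Bell_0)
  ultimately show ?thesis
    by simp
qed

lemma weighted_Bell_sum_split:
  assumes "n \<ge> 2"
  shows "(\<Sum>a=1..n. \<Sum>k=1..n-a. k * (Bell (a - 1) * Bell (n - (a + k))))
    = (\<Sum>k=1..n-1. k * Bell (n - 1 - k)) + (\<Sum>j=2..n-1. Bell (j - 1) * (\<Sum>k=1..n-j. k * Bell (n - j - k)))"
proof -
  obtain m where n: "n = Suc (Suc m)"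
    using assms by (metis add_2_eq_Suc le_Suc_ex)
  define g where "g a = Bell (a - 1) * (\<Sum>k=1..n-a. k * Bell (n - a - k))" for a
  have "(\<Sum>a=1..n. \<Sum>k=1..n-a. k * (Bell (a - 1) * Bell (n - (a + k)))) = (\<Sum>a=1..n. g a)"
    unfolding g_def by (simp add: sum_distrib_left mult.left_commute)
  also have "\<dots> = g 1 + (\<Sum>a=2..Suc m. g a) + g n"
    unfolding n by (simp add: sum.atLeast_Suc_atMost numeral_2_eq_2)
  also have "\<dots> = (\<Sum>k=1..n-1. k * Bell (n - 1 - k)) + (\<Sum>a=2..Suc m. g a)"
    by (simp add: g_def Bell_0)
  finally show ?thesis
    unfolding g_def n by simp
qed

theorem mainTheorem7:
  fixes n :: nat
  assumes "n \<ge> 2"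
  shows "card (avoiders n) =
    2 * Bell n + (\<Sum>j=2..n. \<Sum>k=0..n-j. Bell (n - j - k)) + Bell (n - 1)
    + (\<Sum>j=2..n-1. Bell (j - 1) * (Bell (n - j)
        + (\<Sum>k=1..n-j. (k + (n - j choose k)) * Bell (n - j - k))))"
proof -
  have "(\<Sum>j=2..n-1. Bell (j - 1) * (Bell (n - j) + (\<Sum>k=1..n-j. (k + (n - j choose k)) * Bell (n - j - k))))
      = (\<Sum>j=2..n-1. Bell (j - 1) * Bell (Suc (n - j)))
        + (\<Sum>j=2..n-1. Bell (j - 1) * (\<Sum>k=1..n-j. k * Bell (n - j - k)))"
    by (simp only: Bell_plus_binomial_sum distrib_left sum.distrib)
  then show ?thesis
    using card_avoiders_Bell_sums[of n] Bell_convolution_split[OF assms] weighted_Bell_sum_split[OF assms]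
      sum_weighted_eq_double_sum[where f = Bell and n = n]
    by simp
qed

end
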